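(* Consider the $M_t^{B_t}/G_t/\infty$ queue described in the context, with $Q(0)=0$, and assume that, for a batch arriving at time $s$, given its size the amounts of work in the batch are i.i.d. with CDF $F_s$. Let $0=t_0<t_1<\dots<t_m$, $\alpha=(\alpha_1,\dots,\alpha_m)\in\mathbb{R}_+^m$, $\beta=(\beta_1,\dots,\beta_m)\in\mathbb{R}_+^m$. For $k\in\{1,\dots,m\}$, integer $b\ge1$ and $s\in[t_{k-1},t_k)$ define $$\gamma^{(m)}_{k,b,\alpha,\beta}(s):=1-e^{-b\sum_{x=k}^m\beta_x}\Big[1-\sum_{\ell=k+1}^m\big(1-e^{-\sum_{x=k}^{\ell-1}(\alpha_x-\beta_x)}\big)F_s(t_{\ell-1}-s,t_\ell-s]-\big(1-e^{-\sum_{x=k}^m(\alpha_x-\beta_x)}\big)\overline{F}_s(t_m-s)\Big]^b.$$ Then $$\mathbb{E}\Big[e^{-\sum_{k=1}^m(\alpha_kQ(t_k)+\beta_kD(t_k))}\Big]=\exp\Big(-\sum_{k=1}^m\sum_{b=1}^\infty\int_{t_{k-1}}^{t_k}\gamma^{(m)}_{k,b,\alpha,\beta}(s)\,\mathcal{P}_s(B_s=b)\,\lambda(s)\,ds\Big).$$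
   Context: Model ($M_t^{B_t}/G_t/\infty$ queue): batches of customers arrive at the points of a non-homogeneous Poisson process $\{A(t);t\ge0\}$ on $[0,\infty)$ with rate function $\lambda:[0,\infty)\to[0,\infty)$. A batch arriving at time $s$ has a random positive-integer size $B_s$ with law $\mathcal{P}_s(B_s=\cdot)$ depending on $s$; different batches are independent of each other and of the arrival process. There are infinitely many servers, so a customer arriving at time $s$ with work $S$ departs at time $s+S$. $Q(t)$ is the number of customers in the system at time $t$, $D(t)$ the number of departures in $(0,t]$. Notation: $\overline{F}_s(u)=1-F_s(u)$ and $F_s(a,b]:=F_s(b)-F_s(a)$. *)

theory Defs
  imports "HOL-Probability.Probability"
begin

text \<open>A batch mark: (batch size b, work amounts w 0, w 1, ...); only w 0 .. w (b-1) are used.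
  A realisation of the batch-arrival process is a set of points (s, b, w) in
  real \<times> mark: a batch of size b arriving at time s whose i-th customer (i < b) brings work w i.\<close>

type_synonym mark = "nat \<times> (nat \<Rightarrow> real)"

definition point_space :: "(real \<times> mark) measure" where
  "point_space = borel \<Otimes>\<^sub>M (count_space UNIV \<Otimes>\<^sub>M PiM UNIV (\<lambda>_::nat. borel))"

definition mark_law :: "(real \<Rightarrow> nat pmf) \<Rightarrow> (real \<Rightarrow> real measure) \<Rightarrow> real \<Rightarrow> mark measure" where
  "mark_law Bs W s = measure_pmf (Bs s) \<Otimes>\<^sub>M PiM UNIV (\<lambda>_::nat. W s)"

definition batch_intensity ::
  "(real \<Rightarrow> real) \<Rightarrow> (real \<Rightarrow> nat pmf) \<Rightarrow> (real \<Rightarrow> real measure) \<Rightarrow> (real \<times> mark) set \<Rightarrow> ennreal" where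
  "batch_intensity lam Bs W A =
     (\<integral>\<^sup>+ s. indicator {0..} s * ennreal (lam s) * emeasure (mark_law Bs W s) (Pair s -` A) \<partial>lborel)"

definition batch_poisson_process ::
  "'a measure \<Rightarrow> ('a \<Rightarrow> (real \<times> mark) set) \<Rightarrow> (real \<Rightarrow> real) \<Rightarrow> (real \<Rightarrow> nat pmf)
     \<Rightarrow> (real \<Rightarrow> real measure) \<Rightarrow> bool" where
  "batch_poisson_process M Pts lam Bs W \<longleftrightarrow>
     prob_space M \<and>
     (\<forall>(n::nat) (A :: nat \<Rightarrow> (real \<times> mark) set).
        (\<forall>i<n. A i \<in> sets point_space \<and> batch_intensity lam Bs W (A i) < \<infinity>) \<and>
        (\<forall>i<n. \<forall>j<n. i \<noteq> j \<longrightarrow> A i \<inter> A j = {}) \<longrightarrow>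
          (\<forall>i<n. (AE \<omega> in M. finite (Pts \<omega> \<inter> A i)) \<and>
                 (\<lambda>\<omega>. card (Pts \<omega> \<inter> A i)) \<in> measurable M (count_space UNIV) \<and>
                 (\<forall>k::nat. measure M {\<omega> \<in> space M. card (Pts \<omega> \<inter> A i) = k} =
                    enn2real (batch_intensity lam Bs W (A i)) ^ k / fact k
                      * exp (- enn2real (batch_intensity lam Bs W (A i))))) \<and>
          prob_space.indep_vars M (\<lambda>_. count_space UNIV) (\<lambda>i \<omega>. card (Pts \<omega> \<inter> A i)) {..<n})"

definition queue_Q :: "(real \<times> mark) set \<Rightarrow> real \<Rightarrow> nat" where
  "queue_Q P t = (\<Sum>(s, b, w) \<in> {p \<in> P. fst p \<le> t}. card {i. i < b \<and> t < s + w i})"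

definition queue_D :: "(real \<times> mark) set \<Rightarrow> real \<Rightarrow> nat" where
  "queue_D P t = (\<Sum>(s, b, w) \<in> {p \<in> P. fst p \<le> t}. card {i. i < b \<and> 0 < s + w i \<and> s + w i \<le> t})"

definition gamma_fun ::
  "(real \<Rightarrow> real \<Rightarrow> real) \<Rightarrow> nat \<Rightarrow> (nat \<Rightarrow> real) \<Rightarrow> nat \<Rightarrow> nat \<Rightarrow> (nat \<Rightarrow> real) \<Rightarrow> (nat \<Rightarrow> real) \<Rightarrow> real \<Rightarrow> real" where
  "gamma_fun F m t k b \<alpha> \<beta> s =
     1 - exp (- real b * (\<Sum>x=k..m. \<beta> x)) *
       (1 - (\<Sum>l=k+1..m. (1 - exp (- (\<Sum>x=k..l-1. \<alpha> x - \<beta> x))) * (F s (t l - s) - F s (t (l-1) - s)))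
          - (1 - exp (- (\<Sum>x=k..m. \<alpha> x - \<beta> x))) * (1 - F s (t m - s))) ^ b"

end

theory Submission
  imports Defs
begin

text \<open>Fix \<open>n\<close> and look only at batches of size at most \<open>n\<close> arriving by \<open>t m\<close>. Such a batch arrives in some
  period \<open>(t (k-1), t k]\<close>, and each of its customers departs in one of the slots \<open>k, \<dots>, m+1\<close> cut out
  by the grid. Classifying batches by period \<open>k\<close>, size \<open>b\<close> and the vector \<open>r\<close> of departure slots of
  their customers partitions this part of the point space into finitely many disjoint cells, and on the
  cell \<open>(k, b, r)\<close> the contribution of a batch to \<open>\<Sum>x. \<alpha> x * Q (t x) + \<beta> x * D (t x)\<close> is a constant
  \<open>\<Sum>i<b. v (r i)\<close>. The exponent is thus a nonnegative combination of the independent Poisson counts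
  of the cells, whose Laplace transform is explicit. Summing the intensities over \<open>r\<close> is a multinomial
  expansion: if \<open>p l\<close> is the probability that a customer arriving at \<open>s\<close> departs in slot \<open>l\<close>, then
  \<open>\<Sum>r. (1 - exp (- (\<Sum>i<b. v (r i)))) * (\<Prod>i<b. p (r i)) = (\<Sum>l. p l) ^ b - (\<Sum>l. exp (- v l) * p l) ^ b\<close>,
  which is \<open>gamma_fun\<close>. Finally let \<open>n \<rightarrow> \<infinity>\<close>: almost surely only finitely many batches arrive by \<open>t m\<close>,
  so the truncated exponent is eventually exact, and dominated convergence concludes.\<close>

section \<open>Laplace transforms of Poisson counts\<close>

lemma poisson_laplace:
  fixes N :: "'a \<Rightarrow> nat"
  assumes "prob_space M"
    and N_meas: "N \<in> measurable M (count_space UNIV)"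
    and N_distr: "\<And>k. measure M {\<omega> \<in> space M. N \<omega> = k} = \<mu> ^ k / fact k * exp (- \<mu>)"
    and "0 \<le> c"
  shows "prob_space.expectation M (\<lambda>\<omega>. exp (- (c * real (N \<omega>)))) = exp (- ((1 - exp (- c)) * \<mu>))"
proof -
  interpret prob_space M by fact
  define f where "f k \<omega> = exp (- (c * real k)) * indicator {\<omega> \<in> space M. N \<omega> = k} \<omega>" for k \<omega>
  have level_sets: "{\<omega> \<in> space M. N \<omega> = k} \<in> sets M" for k
    using N_meas by measurable
  have f_sums: "(\<lambda>k. f k \<omega>) sums exp (- (c * real (N \<omega>)))" if "\<omega> \<in> space M" for \<omega>
  proof -
    have "(\<lambda>k. f k \<omega>) = (\<lambda>k. if k = N \<omega> then exp (- (c * real k)) else 0)"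
      using that by (auto simp: f_def indicator_def)
    then show ?thesis using sums_single[of "N \<omega>" "\<lambda>k. exp (- (c * real k))"] by simp
  qed
  have "integral\<^sup>L M (f k) = exp (- (c * real k)) * measure M {\<omega> \<in> space M. N \<omega> = k}" for k
    unfolding f_def using level_sets by simp
  also have "\<dots> k = exp (- \<mu>) * ((\<mu> * exp (- c)) ^ k / fact k)" for k
    by (simp add: N_distr power_mult_distrib exp_of_nat_mult[symmetric] mult_ac)
  finally have integral_f: "integral\<^sup>L M (f k) = exp (- \<mu>) * ((\<mu> * exp (- c)) ^ k / fact k)" for k .
  have integral_sums: "(\<lambda>k. integral\<^sup>L M (f k)) sums (exp (- \<mu>) * exp (\<mu> * exp (- c)))"
    unfolding integral_f using exp_converges[of "\<mu> * exp (- c)"]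
    by (intro sums_mult) (simp add: divide_inverse mult_ac)
  have f_nonneg: "\<bar>f k \<omega>\<bar> = f k \<omega>" for k \<omega>
    by (simp add: f_def)
  have "(\<lambda>k. integral\<^sup>L M (f k)) sums (\<integral>\<omega>. (\<Sum>k. f k \<omega>) \<partial>M)"
  proof (rule sums_integral)
    show "integrable M (f k)" for k
      unfolding f_def using level_sets by (intro integrable_real_mult_indicator) auto
    show "AE x in M. summable (\<lambda>i. norm (f i x))"
      using f_sums by (auto simp: f_nonneg sums_iff)
    show "summable (\<lambda>i. \<integral>x. norm (f i x) \<partial>M)"
      using integral_sums by (simp add: f_nonneg sums_iff)
  qed
  moreover have "(\<integral>\<omega>. (\<Sum>k. f k \<omega>) \<partial>M) = (\<integral>\<omega>. exp (- (c * real (N \<omega>))) \<partial>M)"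
    using f_sums by (intro Bochner_Integration.integral_cong) (simp_all add: sums_iff)
  ultimately have "(\<integral>\<omega>. exp (- (c * real (N \<omega>))) \<partial>M) = exp (- \<mu>) * exp (\<mu> * exp (- c))"
    using integral_sums sums_unique2 by metis
  also have "\<dots> = exp (- ((1 - exp (- c)) * \<mu>))"
    by (simp add: exp_add[symmetric] algebra_simps)
  finally show ?thesis .
qed

lemma batch_poisson_process_prob_space:
  "batch_poisson_process M Pts lam Bs W \<Longrightarrow> prob_space M"
  by (simp add: batch_poisson_process_def)

lemma batch_poisson_process_single:
  assumes "batch_poisson_process M Pts lam Bs W"
    and "A \<in> sets point_space" "batch_intensity lam Bs W A < \<infinity>"
  shows "(AE \<omega> in M. finite (Pts \<omega> \<inter> A)) \<and>
    (\<lambda>\<omega>. card (Pts \<omega> \<inter> A)) \<in> measurable M (count_space UNIV) \<and>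
    (\<forall>k. measure M {\<omega> \<in> space M. card (Pts \<omega> \<inter> A) = k} =
       enn2real (batch_intensity lam Bs W A) ^ k / fact k * exp (- enn2real (batch_intensity lam Bs W A)))"
  using assms(1)[unfolded batch_poisson_process_def, THEN conjunct2, rule_format, of 1 "\<lambda>_. A"]
    assms(2,3) by simp

lemmas batch_poisson_process_AE_finite = batch_poisson_process_single[THEN conjunct1]
  and measurable_batch_poisson_count = batch_poisson_process_single[THEN conjunct2, THEN conjunct1]
  and batch_poisson_count_distr = batch_poisson_process_single[THEN conjunct2, THEN conjunct2, rule_format]

lemma batch_poisson_process_indep_counts:
  fixes n :: nat
  assumes "batch_poisson_process M Pts lam Bs W"
    and "\<And>i. i < n \<Longrightarrow> A i \<in> sets point_space" "\<And>i. i < n \<Longrightarrow> batch_intensity lam Bs W (A i) < \<infinity>"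
    and "\<And>i j. i < n \<Longrightarrow> j < n \<Longrightarrow> i \<noteq> j \<Longrightarrow> A i \<inter> A j = {}"
  shows "prob_space.indep_vars M (\<lambda>_. count_space UNIV) (\<lambda>i \<omega>. card (Pts \<omega> \<inter> A i)) {..<n}"
  using assms(1)[unfolded batch_poisson_process_def, THEN conjunct2, rule_format, of n A]
    assms(2-4) by blast

lemma batch_poisson_process_laplace:
  assumes proc: "batch_poisson_process M Pts lam Bs W"
    and "finite J"
    and C_sets: "\<And>j. j \<in> J \<Longrightarrow> C j \<in> sets point_space"
    and C_finite: "\<And>j. j \<in> J \<Longrightarrow> batch_intensity lam Bs W (C j) < \<infinity>"
    and C_disjoint: "\<And>i j. i \<in> J \<Longrightarrow> j \<in> J \<Longrightarrow> i \<noteq> j \<Longrightarrow> C i \<inter> C j = {}"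
    and c_nonneg: "\<And>j. j \<in> J \<Longrightarrow> 0 \<le> c j"
  shows "prob_space.expectation M (\<lambda>\<omega>. exp (- (\<Sum>j\<in>J. c j * real (card (Pts \<omega> \<inter> C j)))))
       = exp (- (\<Sum>j\<in>J. (1 - exp (- c j)) * enn2real (batch_intensity lam Bs W (C j))))"
proof -
  interpret prob_space M
    using proc by (rule batch_poisson_process_prob_space)
  \<comment> \<open>The process is specified on families indexed by \<open>{..<n}\<close>, hence the enumeration \<open>h\<close> of \<open>J\<close>.\<close>
  define n where "n = card J"
  obtain h where h: "bij_betw h {..<n} J"
    using ex_bij_betw_nat_finite[OF \<open>finite J\<close>] by (auto simp: n_def atLeast0LessThan)
  define X where "X i \<omega> = exp (- (c (h i) * real (card (Pts \<omega> \<inter> C (h i)))))" for i \<omega>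
  have hJ: "i < n \<Longrightarrow> h i \<in> J" for i
    using h by (auto dest: bij_betwE)
  have h_inj: "i < n \<Longrightarrow> j < n \<Longrightarrow> i \<noteq> j \<Longrightarrow> h i \<noteq> h j" for i j
    using h by (auto simp: bij_betw_def inj_on_def)
  have "indep_vars (\<lambda>_. count_space UNIV) (\<lambda>i \<omega>. card (Pts \<omega> \<inter> C (h i))) {..<n}"
  proof (rule batch_poisson_process_indep_counts[OF proc])
    fix i j assume "i < n"
    then show "C (h i) \<in> sets point_space" "batch_intensity lam Bs W (C (h i)) < \<infinity>"
      using hJ C_sets C_finite by blast+
    assume "j < n" "i \<noteq> j"
    with \<open>i < n\<close> show "C (h i) \<inter> C (h j) = {}"
      using hJ h_inj C_disjoint by blast
  qed
  then have indep: "indep_vars (\<lambda>_. borel) X {..<n}"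
    unfolding X_def by (rule indep_vars_compose2) simp
  have X_integrable: "integrable M (X i)" if "i \<in> {..<n}" for i
  proof (rule integrable_const_bound[where B=1])
    show "AE \<omega> in M. norm (X i \<omega>) \<le> 1"
      using c_nonneg hJ that by (auto simp: X_def)
    have [measurable]: "(\<lambda>\<omega>. card (Pts \<omega> \<inter> C (h i))) \<in> measurable M (count_space UNIV)"
      using hJ that C_sets C_finite by (intro measurable_batch_poisson_count[OF proc]) auto
    show "X i \<in> borel_measurable M"
      unfolding X_def by measurable
  qed
  have "expectation (\<lambda>\<omega>. exp (- (\<Sum>j\<in>J. c j * real (card (Pts \<omega> \<inter> C j)))))
      = expectation (\<lambda>\<omega>. \<Prod>i<n. X i \<omega>)"
    by (simp add: X_def sum.reindex_bij_betw[OF h, symmetric] exp_sum[symmetric] sum_negf)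
  also have "\<dots> = (\<Prod>i<n. expectation (X i))"
    by (rule indep_vars_lebesgue_integral[OF _ indep X_integrable]) simp
  also have "\<dots> = (\<Prod>i<n. exp (- ((1 - exp (- c (h i))) * enn2real (batch_intensity lam Bs W (C (h i))))))"
    unfolding X_def using hJ C_sets C_finite c_nonneg
    by (intro prod.cong refl poisson_laplace[OF prob_space_axioms] measurable_batch_poisson_count[OF proc]
        batch_poisson_count_distr[OF proc]) auto
  also have "\<dots> = exp (- (\<Sum>j\<in>J. (1 - exp (- c j)) * enn2real (batch_intensity lam Bs W (C j))))"
    by (simp add: sum.reindex_bij_betw[OF h, symmetric] exp_sum[symmetric] sum_negf)
  finally show ?thesis .
qed

lemma batch_poisson_process_AE_disjoint:
  assumes proc: "batch_poisson_process M Pts lam Bs W"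
    and A: "A \<in> sets point_space" "batch_intensity lam Bs W A = 0"
  shows "AE \<omega> in M. Pts \<omega> \<inter> A = {}"
proof -
  interpret prob_space M
    using proc by (rule batch_poisson_process_prob_space)
  have fin: "batch_intensity lam Bs W A < \<infinity>"
    using A by simp
  have [measurable]: "(\<lambda>\<omega>. card (Pts \<omega> \<inter> A)) \<in> measurable M (count_space UNIV)"
    by (rule measurable_batch_poisson_count[OF proc A(1) fin])
  have "prob {\<omega> \<in> space M. card (Pts \<omega> \<inter> A) = 0} = 1"
    using batch_poisson_count_distr[OF proc A(1) fin, of 0] A(2) by simp
  then have "AE \<omega> in M. card (Pts \<omega> \<inter> A) = 0"
    by (subst prob_Collect_eq_1[symmetric]) simp_all
  with batch_poisson_process_AE_finite[OF proc A(1) fin] show ?thesis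
    by eventually_elim auto
qed

section \<open>The point space and the mark law\<close>

lemma space_point_space [simp]: "space point_space = UNIV"
  by (simp add: point_space_def space_pair_measure space_PiM PiE_UNIV_domain)

lemma point_space_coordinates_measurable [measurable]:
  "(\<lambda>p::real \<times> mark. fst p) \<in> borel_measurable point_space"
  "(\<lambda>p::real \<times> mark. fst (snd p)) \<in> measurable point_space (count_space UNIV)"
  "(\<lambda>p::real \<times> mark. snd (snd p) i) \<in> borel_measurable point_space"
  unfolding point_space_def by measurable

lemma sets_mark_law:
  assumes "\<And>s. sets (W s) = sets borel"
  shows "sets (mark_law Bs W s) = sets (count_space UNIV \<Otimes>\<^sub>M PiM UNIV (\<lambda>_::nat. borel))"
  unfolding mark_law_def by (intro sets_pair_measure_cong sets_PiM_cong) (auto simp: assms)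

lemma vimage_Pair_in_sets_mark_law:
  assumes "\<And>s. sets (W s) = sets borel" and "A \<in> sets point_space"
  shows "Pair s -` A \<in> sets (mark_law Bs W s)"
  unfolding sets_mark_law[OF assms(1)] using assms(2) unfolding point_space_def by (rule sets_Pair1)

lemma batch_intensity_mono:
  assumes "\<And>s. sets (W s) = sets borel" and "B \<in> sets point_space" and "A \<subseteq> B"
  shows "batch_intensity lam Bs W A \<le> batch_intensity lam Bs W B"
  unfolding batch_intensity_def
proof (intro nn_integral_mono mult_left_mono)
  show "emeasure (mark_law Bs W s) (Pair s -` A) \<le> emeasure (mark_law Bs W s) (Pair s -` B)" for s
    using assms vimage_Pair_in_sets_mark_law[OF assms(1,2)] by (intro emeasure_mono) auto
qed auto

lemma prob_space_mark_law:
  assumes "\<And>s. prob_space (W s)"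
  shows "prob_space (mark_law Bs W s)"
  unfolding mark_law_def by (intro prob_space_pair prob_space_PiM assms prob_space_measure_pmf)

lemma emeasure_mark_law_rect:
  assumes W_prob: "\<And>s. prob_space (W s)" and W_sets: "\<And>s. sets (W s) = sets borel"
    and "finite J" and X_sets: "\<And>i. i \<in> J \<Longrightarrow> X i \<in> sets borel"
  shows "emeasure (mark_law Bs W s) (B \<times> {w. \<forall>i\<in>J. w i \<in> X i})
       = emeasure (measure_pmf (Bs s)) B * (\<Prod>i\<in>J. emeasure (W s) (X i))"
proof -
  interpret product_prob_space "\<lambda>_. W s" UNIV
    using W_prob by (rule product_prob_spaceI)
  have space_W: "space (W s) = UNIV"
    using sets_eq_imp_space_eq[OF W_sets[of s]] by simp
  have cylinder: "{w. \<forall>i\<in>J. w i \<in> X i} = prod_emb UNIV (\<lambda>_. W s) J (PiE J X)"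
    by (simp add: prod_emb_def space_W restrict_PiE_iff Pi_iff set_eq_iff)
  have X_sets': "\<And>i. i \<in> J \<Longrightarrow> X i \<in> sets (W s)"
    using X_sets W_sets by auto
  have "emeasure (mark_law Bs W s) (B \<times> {w. \<forall>i\<in>J. w i \<in> X i})
      = emeasure (measure_pmf (Bs s)) B * emeasure (PiM UNIV (\<lambda>_. W s)) {w. \<forall>i\<in>J. w i \<in> X i}"
    unfolding mark_law_def cylinder using X_sets' \<open>finite J\<close>
    by (intro emeasure_pair_measure_Times sets_PiM_I) auto
  also have "emeasure (PiM UNIV (\<lambda>_. W s)) {w. \<forall>i\<in>J. w i \<in> X i} = (\<Prod>i\<in>J. emeasure (W s) (X i))"
    unfolding cylinder by (rule emeasure_PiM_emb) (simp_all add: X_sets' \<open>finite J\<close>)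
  finally show ?thesis .
qed

lemma batch_intensity_rect:
  assumes "\<And>s. prob_space (W s)" "\<And>s. sets (W s) = sets borel"
    and X_sets: "\<And>i s. i < b \<Longrightarrow> X i s \<in> sets borel"
  shows "batch_intensity lam Bs W {p. fst p \<in> I \<and> fst (snd p) = b \<and> (\<forall>i<b. snd (snd p) i \<in> X i (fst p))}
   = (\<integral>\<^sup>+ s. indicator {0..} s * ennreal (lam s) *
        (indicator I s * (ennreal (pmf (Bs s) b) * (\<Prod>i<b. emeasure (W s) (X i s)))) \<partial>lborel)"
  unfolding batch_intensity_def
proof (intro nn_integral_cong arg_cong2[where f="(*)"] refl)
  fix s
  have "Pair s -` {p. fst p \<in> I \<and> fst (snd p) = b \<and> (\<forall>i<b. snd (snd p) i \<in> X i (fst p))}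
      = (if s \<in> I then {b} \<times> {w. \<forall>i\<in>{..<b}. w i \<in> X i s} else {})"
    by auto
  then show "emeasure (mark_law Bs W s) (Pair s -` {p. fst p \<in> I \<and> fst (snd p) = b \<and> (\<forall>i<b. snd (snd p) i \<in> X i (fst p))})
      = indicator I s * (ennreal (pmf (Bs s) b) * (\<Prod>i<b. emeasure (W s) (X i s)))"
    using emeasure_mark_law_rect[OF assms(1,2), where J="{..<b}" and X="\<lambda>i. X i s" and B="{b}" and s=s] X_sets
    by (simp add: indicator_def emeasure_pmf_single)
qed

lemma batch_intensity_arrived_by:
  assumes lam_nonneg: "\<And>s. 0 \<le> lam s" and lam_loc_int: "set_integrable lborel {0..T} lam"
    and W_prob: "\<And>s. prob_space (W s)" and W_sets: "\<And>s. sets (W s) = sets borel"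
  shows "batch_intensity lam Bs W {p. fst p \<le> T} = ennreal (\<integral>s. indicator {0..T} s * lam s \<partial>lborel)"
proof -
  have "batch_intensity lam Bs W {p. fst p \<le> T} = (\<integral>\<^sup>+ s. ennreal (indicator {0..T} s * lam s) \<partial>lborel)"
    unfolding batch_intensity_def
  proof (intro nn_integral_cong)
    fix s
    have "Pair s -` {p. fst p \<le> T} = (if s \<le> T then space (mark_law Bs W s) else {})"
      using sets_eq_imp_space_eq[OF W_sets[of s]]
      by (auto simp: mark_law_def space_pair_measure space_PiM PiE_UNIV_domain)
    then show "indicator {0..} s * ennreal (lam s) * emeasure (mark_law Bs W s) (Pair s -` {p. fst p \<le> T})
        = ennreal (indicator {0..T} s * lam s)"
      using prob_space.emeasure_space_1[OF prob_space_mark_law[OF W_prob]]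
      by (auto simp: indicator_def)
  qed
  also have "\<dots> = ennreal (\<integral>s. indicator {0..T} s * lam s \<partial>lborel)"
    using lam_loc_int lam_nonneg
    by (intro nn_integral_eq_integral) (auto simp: set_integrable_def indicator_def)
  finally show ?thesis .
qed

lemma arrived_by_in_sets: "{p. fst p \<le> T} \<in> sets point_space"
proof -
  have "{p. fst p \<le> T} = {p \<in> space point_space. fst p \<le> T}"
    by simp
  also have "\<dots> \<in> sets point_space"
    by measurable
  finally show ?thesis .
qed

definition degenerate_batches :: "(real \<times> mark) set" where
  "degenerate_batches = {p. fst p \<le> 0 \<or> fst (snd p) = 0 \<or> (\<exists>i<fst (snd p). snd (snd p) i < 0)}"

lemma degenerate_batches_in_sets: "degenerate_batches \<in> sets point_space"
proof -
  have "degenerate_batches = {p \<in> space point_space. fst p \<le> 0} \<union> {p \<in> space point_space. fst (snd p) = 0}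
      \<union> (\<Union>i. {p \<in> space point_space. i < fst (snd p) \<and> snd (snd p) i < 0})"
    by (auto simp: degenerate_batches_def)
  also have "\<dots> \<in> sets point_space"
    by measurable
  finally show ?thesis .
qed

lemma batch_intensity_degenerate_batches:
  assumes W_prob: "\<And>s. prob_space (W s)" and W_sets: "\<And>s. sets (W s) = sets borel"
    and B_pos: "\<And>s. 0 \<notin> set_pmf (Bs s)" and W_nonneg: "\<And>s. emeasure (W s) {..<0} = 0"
  shows "batch_intensity lam Bs W degenerate_batches = 0"
proof -
  have section_null: "Pair s -` degenerate_batches \<in> null_sets (mark_law Bs W s)" if "0 < s" for s
  proof -
    have empty_batch: "{0::nat} \<times> {w. \<forall>i\<in>{}. w i \<in> UNIV} \<in> null_sets (mark_law Bs W s)"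
    proof (rule null_setsI)
      show "emeasure (mark_law Bs W s) ({0} \<times> {w. \<forall>i\<in>{}. w i \<in> UNIV}) = 0"
        using emeasure_mark_law_rect[OF W_prob W_sets, where J="{}" and X="\<lambda>_. UNIV" and B="{0}" and s=s] B_pos[of s]
        by (simp add: emeasure_pmf_single pmf_eq_0_set_pmf)
      have "{0::nat} \<times> {w. \<forall>i\<in>{}. w i \<in> (UNIV::real set)} = Pair s -` {p \<in> space point_space. fst (snd p) = 0}"
        by auto
      also have "\<dots> \<in> sets (mark_law Bs W s)"
        by (intro vimage_Pair_in_sets_mark_law W_sets) measurable
      finally show "{0::nat} \<times> {w. \<forall>i\<in>{}. w i \<in> UNIV} \<in> sets (mark_law Bs W s)" .
    qed
    have negative_work: "UNIV \<times> {w. \<forall>i\<in>{j}. w i \<in> {..<0::real}} \<in> null_sets (mark_law Bs W s)" for j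
    proof (rule null_setsI)
      show "emeasure (mark_law Bs W s) (UNIV \<times> {w. \<forall>i\<in>{j}. w i \<in> {..<0}}) = 0"
        using emeasure_mark_law_rect[OF W_prob W_sets, where J="{j}" and X="\<lambda>_. {..<0}" and B=UNIV and s=s] W_nonneg[of s]
        by simp
      have "UNIV \<times> {w. \<forall>i\<in>{j}. w i \<in> {..<0::real}} = Pair s -` {p \<in> space point_space. snd (snd p) j < 0}"
        by auto
      also have "\<dots> \<in> sets (mark_law Bs W s)"
        by (intro vimage_Pair_in_sets_mark_law W_sets) measurable
      finally show "UNIV \<times> {w. \<forall>i\<in>{j}. w i \<in> {..<0::real}} \<in> sets (mark_law Bs W s)" .
    qed
    have "({0} \<times> {w. \<forall>i\<in>{}. w i \<in> UNIV}) \<union> (\<Union>j. UNIV \<times> {w. \<forall>i\<in>{j}. w i \<in> {..<0}})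
        \<in> null_sets (mark_law Bs W s)"
      using empty_batch negative_work by (intro null_sets.Un null_sets_UN) auto
    then show ?thesis
      by (rule null_sets_subset[OF _ vimage_Pair_in_sets_mark_law[OF W_sets degenerate_batches_in_sets]])
        (use that in \<open>auto simp: degenerate_batches_def\<close>)
  qed
  have "batch_intensity lam Bs W degenerate_batches = (\<integral>\<^sup>+ (s::real). 0 \<partial>lborel)"
    unfolding batch_intensity_def
  proof (rule nn_integral_cong_AE)
    show "AE s in lborel. indicator {0..} s * ennreal (lam s) * emeasure (mark_law Bs W s) (Pair s -` degenerate_batches) = 0"
      using AE_lborel_singleton[of "0::real"]
    proof eventually_elim
      case (elim s)
      then show ?case
        by (cases "0 < s") (auto simp: section_null[THEN null_setsD1] indicator_def not_less)
    qed
  qed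
  then show ?thesis
    by simp
qed

section \<open>Queue counts as sums over the points of the process\<close>

text \<open>The guard covers infinite \<open>P \<inter> A\<close>, where both the sum and the cardinality are \<open>0\<close>.\<close>

lemma real_sum_eq_suminf_level_sets:
  fixes g :: "'p \<Rightarrow> nat"
  shows "real (\<Sum>p\<in>P \<inter> A. g p) =
    (if card (P \<inter> A) = 0 then 0 else (\<Sum>n. real n * real (card (P \<inter> (A \<inter> {p. g p = n})))))"
proof (cases "finite (P \<inter> A) \<and> P \<inter> A \<noteq> {}")
  case True
  then have "finite (P \<inter> A)" and "card (P \<inter> A) \<noteq> 0"
    by auto
  have level_set: "{x \<in> P \<inter> A. g x = n} = P \<inter> (A \<inter> {p. g p = n})" for n
    by auto
  have "(\<Sum>p\<in>P \<inter> A. g p) = (\<Sum>n\<in>g ` (P \<inter> A). \<Sum>p\<in>{x \<in> P \<inter> A. g x = n}. g p)"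
    using sum.image_gen[OF \<open>finite (P \<inter> A)\<close>] .
  also have "\<dots> = (\<Sum>n\<in>g ` (P \<inter> A). n * card (P \<inter> (A \<inter> {p. g p = n})))"
    unfolding level_set by (intro sum.cong refl) simp
  finally have "real (\<Sum>p\<in>P \<inter> A. g p) = (\<Sum>n\<in>g ` (P \<inter> A). real n * real (card (P \<inter> (A \<inter> {p. g p = n}))))"
    by simp
  also have "\<dots> = (\<Sum>n. real n * real (card (P \<inter> (A \<inter> {p. g p = n}))))"
    using \<open>finite (P \<inter> A)\<close> by (intro suminf_finite[symmetric]) (auto simp: card_eq_0_iff)
  finally show ?thesis
    using \<open>card (P \<inter> A) \<noteq> 0\<close> by simp
qed auto

lemma measurable_batch_poisson_sum:
  fixes g :: "real \<times> mark \<Rightarrow> nat"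
  assumes proc: "batch_poisson_process M Pts lam Bs W"
    and W_sets: "\<And>s. sets (W s) = sets borel"
    and A: "A \<in> sets point_space" "batch_intensity lam Bs W A < \<infinity>"
    and g: "g \<in> measurable point_space (count_space UNIV)"
  shows "(\<lambda>\<omega>. real (\<Sum>p\<in>Pts \<omega> \<inter> A. g p)) \<in> borel_measurable M"
proof -
  have level_sets: "A \<inter> {p. g p = n} \<in> sets point_space" for n
    using sets.Int[OF A(1) measurable_sets[OF g, of "{n}"]] by (simp add: vimage_def Collect_conj_eq)
  have "batch_intensity lam Bs W (A \<inter> {p. g p = n}) < \<infinity>" for n
    by (rule le_less_trans[OF batch_intensity_mono[where lam=lam and Bs=Bs and W=W, OF W_sets A(1)] A(2)]) auto
  then have [measurable]: "(\<lambda>\<omega>. card (Pts \<omega> \<inter> (A \<inter> {p. g p = n}))) \<in> measurable M (count_space UNIV)" for n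
    using measurable_batch_poisson_count[OF proc level_sets] by blast
  have [measurable]: "(\<lambda>\<omega>. card (Pts \<omega> \<inter> A)) \<in> measurable M (count_space UNIV)"
    using measurable_batch_poisson_count[OF proc A] .
  have "(\<lambda>\<omega>. \<Sum>n. real n * real (card (Pts \<omega> \<inter> (A \<inter> {p. g p = n})))) \<in> borel_measurable M"
    by (rule borel_measurable_suminf) measurable
  moreover have "{\<omega> \<in> space M. card (Pts \<omega> \<inter> A) = 0} \<in> sets M"
    by measurable
  ultimately show ?thesis
    unfolding real_sum_eq_suminf_level_sets by (intro measurable_If) simp_all
qed

definition batch_count :: "(real \<Rightarrow> bool) \<Rightarrow> real \<times> mark \<Rightarrow> nat" where
  "batch_count D p = card {i. i < fst (snd p) \<and> D (fst p + snd (snd p) i)}"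

lemma batch_count_eq_card: "batch_count D p = card ({..<fst (snd p)} \<inter> {i. D (fst p + snd (snd p) i)})"
  unfolding batch_count_def by (intro arg_cong[where f=card]) blast

lemma measurable_batch_count:
  assumes "{d. D d} \<in> sets borel"
  shows "batch_count D \<in> measurable point_space (count_space UNIV)"
proof -
  have "{p \<in> space point_space. D (fst p + snd (snd p) i)} \<in> sets point_space" for i
  proof -
    have "{p \<in> space point_space. D (fst p + snd (snd p) i)} = (\<lambda>p. fst p + snd (snd p) i) -` {d. D d} \<inter> space point_space"
      by auto
    also have "\<dots> \<in> sets point_space"
      using assms by (intro measurable_sets[where A=borel]) simp_all
    finally show ?thesis .
  qed
  then have "(\<lambda>p. of_bool (D (fst p + snd (snd p) i)) :: nat) \<in> measurable point_space (count_space UNIV)" for i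
    unfolding of_bool_def by (intro measurable_If measurable_const) simp_all
  then have "(\<lambda>p. \<Sum>i<b. of_bool (D (fst p + snd (snd p) i)) :: nat) \<in> measurable point_space (count_space UNIV)" for b
    by (intro measurable_sum_nat)
  then have "(\<lambda>p. \<Sum>i<fst (snd p). of_bool (D (fst p + snd (snd p) i)) :: nat) \<in> measurable point_space (count_space UNIV)"
    by (rule measurable_compose_countable[OF _ point_space_coordinates_measurable(2)])
  then show ?thesis
    by (simp only: batch_count_eq_card[abs_def] sum_of_bool_eq finite_lessThan of_nat_id)
qed

lemma queue_Q_eq_sum_batch_count: "queue_Q P T = (\<Sum>p\<in>{p\<in>P. fst p \<le> T}. batch_count (\<lambda>d. T < d) p)"
  by (simp add: queue_Q_def batch_count_def case_prod_beta)

lemma queue_D_eq_sum_batch_count: "queue_D P T = (\<Sum>p\<in>{p\<in>P. fst p \<le> T}. batch_count (\<lambda>d. 0 < d \<and> d \<le> T) p)"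
  by (simp add: queue_D_def batch_count_def case_prod_beta)

lemma scaled_sum_batch_count:
  assumes "finite P"
  shows "c * real (\<Sum>p\<in>{p\<in>P. fst p \<le> T}. batch_count D p)
    = (\<Sum>p\<in>P. \<Sum>i<fst (snd p). if fst p \<le> T \<and> D (fst p + snd (snd p) i) then c else 0)"
proof -
  have "c * real (\<Sum>p\<in>{p\<in>P. fst p \<le> T}. batch_count D p)
      = (\<Sum>p\<in>{p\<in>P. fst p \<le> T}. c * real (batch_count D p))"
    by (simp add: sum_distrib_left)
  also have "\<dots> = (\<Sum>p\<in>P. if fst p \<le> T then c * real (batch_count D p) else 0)"
    using assms by (rule sum.inter_filter)
  also have "\<dots> = (\<Sum>p\<in>P. \<Sum>i<fst (snd p). if fst p \<le> T \<and> D (fst p + snd (snd p) i) then c else 0)"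
  proof (intro sum.cong refl)
    show "(if fst p \<le> T then c * real (batch_count D p) else 0)
        = (\<Sum>i<fst (snd p). if fst p \<le> T \<and> D (fst p + snd (snd p) i) then c else 0)" for p
      by (cases "fst p \<le> T") (simp_all add: batch_count_eq_card sum.If_cases)
  qed
  finally show ?thesis .
qed

section \<open>The queue driven by a batch Poisson process\<close>

locale batch_arrivals =
  fixes M :: "'a measure" and Pts :: "'a \<Rightarrow> (real \<times> mark) set"
    and lam :: "real \<Rightarrow> real" and Bs :: "real \<Rightarrow> nat pmf" and W :: "real \<Rightarrow> real measure"
  assumes lam_nonneg: "\<And>s. 0 \<le> lam s"
    and lam_meas: "lam \<in> borel_measurable borel"
    and lam_loc_int: "\<And>T. set_integrable lborel {0..T} lam"
    and B_pos: "\<And>s. 0 \<notin> set_pmf (Bs s)"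
    and B_meas: "\<And>b. (\<lambda>s. pmf (Bs s) b) \<in> borel_measurable borel"
    and W_prob: "\<And>s. prob_space (W s)"
    and W_sets: "\<And>s. sets (W s) = sets borel"
    and W_nonneg: "\<And>s. emeasure (W s) {..<0} = 0"
    and W_meas: "W \<in> measurable borel (subprob_algebra borel)"
    and proc: "batch_poisson_process M Pts lam Bs W"
begin

lemma batch_intensity_arrived_by_finite: "batch_intensity lam Bs W {p. fst p \<le> T} < \<infinity>"
  using batch_intensity_arrived_by[OF lam_nonneg lam_loc_int W_prob W_sets] by simp

lemma AE_finite_arrived_by: "AE \<omega> in M. finite (Pts \<omega> \<inter> {p. fst p \<le> T})"
  by (rule batch_poisson_process_AE_finite[OF proc arrived_by_in_sets batch_intensity_arrived_by_finite])

lemma AE_no_degenerate_batches: "AE \<omega> in M. Pts \<omega> \<inter> degenerate_batches = {}"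
  using batch_intensity_degenerate_batches[OF W_prob W_sets B_pos W_nonneg]
  by (intro batch_poisson_process_AE_disjoint[OF proc degenerate_batches_in_sets])

lemma measurable_sum_batch_count_arrived_by:
  assumes "{d. D d} \<in> sets borel"
  shows "(\<lambda>\<omega>. real (\<Sum>p\<in>{p\<in>Pts \<omega>. fst p \<le> T}. batch_count D p)) \<in> borel_measurable M"
proof -
  have arrived: "{p\<in>Pts \<omega>. fst p \<le> T} = Pts \<omega> \<inter> {p. fst p \<le> T}" for \<omega>
    by blast
  show ?thesis
    unfolding arrived
    by (rule measurable_batch_poisson_sum[OF proc W_sets arrived_by_in_sets batch_intensity_arrived_by_finite
          measurable_batch_count[OF assms]])
qed

lemma measurable_queue_Q [measurable]: "(\<lambda>\<omega>. real (queue_Q (Pts \<omega>) T)) \<in> borel_measurable M"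
  unfolding queue_Q_eq_sum_batch_count by (rule measurable_sum_batch_count_arrived_by) simp

lemma measurable_queue_D [measurable]: "(\<lambda>\<omega>. real (queue_D (Pts \<omega>) T)) \<in> borel_measurable M"
  unfolding queue_D_eq_sum_batch_count by (rule measurable_sum_batch_count_arrived_by) simp

end

locale batch_arrivals_grid = batch_arrivals +
  fixes m :: nat and t :: "nat \<Rightarrow> real" and \<alpha> \<beta> :: "nat \<Rightarrow> real"
  assumes t0: "t 0 = 0"
    and t_mono: "\<And>k. k < m \<Longrightarrow> t k < t (Suc k)"
    and \<alpha>_nonneg: "\<And>k. k \<in> {1..m} \<Longrightarrow> 0 \<le> \<alpha> k"
    and \<beta>_nonneg: "\<And>k. k \<in> {1..m} \<Longrightarrow> 0 \<le> \<beta> k"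
begin

lemma grid_mono:
  assumes "i \<le> j" "j \<le> m"
  shows "t i \<le> t j"
  using assms(1)
proof (induction j rule: dec_induct)
  case (step n)
  with assms(2) have "t n < t (Suc n)"
    by (intro t_mono) simp
  with step.IH show ?case
    by simp
qed simp

lemma grid_nonneg: "i \<le> m \<Longrightarrow> 0 \<le> t i"
  using grid_mono[of 0 i] t0 by simp

lemma grid_interval_exists:
  "a < b \<Longrightarrow> b \<le> m \<Longrightarrow> t a < d \<Longrightarrow> d \<le> t b \<Longrightarrow> \<exists>l. a < l \<and> l \<le> b \<and> t (l - 1) < d \<and> d \<le> t l"
proof (induction b)
  case (Suc b)
  show ?case
  proof (cases "d \<le> t b \<and> a < b")
    case True
    with Suc obtain l where "a < l \<and> l \<le> b \<and> t (l - 1) < d \<and> d \<le> t l"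
      by auto
    then show ?thesis
      by (intro exI[of _ l]) auto
  next
    case False
    with Suc have "t b < d"
      by (cases "a < b") (auto simp: less_Suc_eq)
    with Suc show ?thesis
      by (intro exI[of _ "Suc b"]) auto
  qed
qed simp

lemma grid_interval_unique:
  assumes "k \<le> m" "k' \<le> m" and "s \<in> {t (k - 1)<..t k}" "s \<in> {t (k' - 1)<..t k'}"
  shows "k = k'"
proof -
  have "\<not> a < a'" if "a' \<le> m" "s \<in> {t (a - 1)<..t a}" "s \<in> {t (a' - 1)<..t a'}" for a a'
  proof
    assume "a < a'"
    with that have "t a \<le> t (a' - 1)"
      by (intro grid_mono) auto
    with that show False
      by auto
  qed
  from this[OF assms(2-4)] this[OF assms(1) assms(4,3)] show ?thesis
    by simp
qed

lemma arrival_le_grid_iff: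
  assumes "k \<le> m" "s \<in> {t (k - 1)<..t k}" "x \<in> {1..m}"
  shows "s \<le> t x \<longleftrightarrow> k \<le> x"
proof
  assume "s \<le> t x"
  show "k \<le> x"
  proof (rule ccontr)
    assume "\<not> k \<le> x"
    then have "t x \<le> t (k - 1)"
      using assms by (intro grid_mono) auto
    with \<open>s \<le> t x\<close> assms(2) show False
      by auto
  qed
qed (use assms grid_mono[of k x] in auto)

text \<open>A customer arriving at time \<open>s\<close> in the period \<open>(t (k-1), t k]\<close> with work \<open>w\<close> departs in
  slot \<open>l \<in> {k..m+1}\<close>: slot \<open>k\<close> collects the departures up to \<open>t k\<close>, slot \<open>l\<close> with \<open>k < l \<le> m\<close> those
  in \<open>(t (l-1), t l]\<close>, and slot \<open>m+1\<close> those after \<open>t m\<close>.\<close>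

definition slot :: "nat \<Rightarrow> nat \<Rightarrow> real \<Rightarrow> real set" where
  "slot k l s = {w. 0 \<le> w \<and> (l \<noteq> k \<longrightarrow> t (l - 1) < s + w) \<and> (l \<le> m \<longrightarrow> s + w \<le> t l)}"

lemma slot_in_sets: "slot k l s \<in> sets borel"
proof -
  have "slot k l s = {w \<in> space borel. 0 \<le> w \<and> (l \<noteq> k \<longrightarrow> t (l - 1) < s + w) \<and> (l \<le> m \<longrightarrow> s + w \<le> t l)}"
    by (simp add: slot_def)
  also have "\<dots> \<in> sets borel"
    by measurable
  finally show ?thesis .
qed

lemma slot_exists:
  assumes "k \<le> m" "s \<in> {t (k - 1)<..t k}" "0 \<le> w"
  shows "\<exists>l\<in>{k..Suc m}. w \<in> slot k l s"
proof (cases "s + w \<le> t k")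
  case True
  with assms show ?thesis
    by (intro bexI[of _ k]) (auto simp: slot_def)
next
  case not_first: False
  show ?thesis
  proof (cases "t m < s + w")
    case True
    with assms not_first show ?thesis
      by (intro bexI[of _ "Suc m"]) (auto simp: slot_def)
  next
    case False
    with not_first assms(1) have "k < m"
      by (metis le_neq_implies_less not_le)
    with False not_first obtain l where "k < l" "l \<le> m" "t (l - 1) < s + w" "s + w \<le> t l"
      using grid_interval_exists[of k m "s + w"] by auto
    with assms show ?thesis
      by (intro bexI[of _ l]) (auto simp: slot_def)
  qed
qed

lemma slot_unique:
  assumes "l \<in> {k..Suc m}" "l' \<in> {k..Suc m}" and "w \<in> slot k l s" "w \<in> slot k l' s"
  shows "l = l'"
proof -
  have "\<not> a < a'" if "a \<in> {k..Suc m}" "a' \<in> {k..Suc m}" "w \<in> slot k a s" "w \<in> slot k a' s" for a a'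
  proof
    assume "a < a'"
    with that have "s + w \<le> t a" "t (a' - 1) < s + w"
      by (auto simp: slot_def)
    moreover have "t a \<le> t (a' - 1)"
      using \<open>a < a'\<close> that(2) by (intro grid_mono) auto
    ultimately show False
      by simp
  qed
  from this[OF assms(1-4)] this[OF assms(2,1) assms(4,3)] show ?thesis
    by simp
qed

lemma departure_in_slot:
  assumes "k \<le> m" "s \<in> {t (k - 1)<..t k}" "l \<in> {k..Suc m}" "w \<in> slot k l s" "x \<in> {k..m}"
  shows "t x < s + w \<longleftrightarrow> x < l" and "s + w \<le> t x \<longleftrightarrow> l \<le> x" and "0 < s + w"
proof -
  have "0 \<le> t (k - 1)"
    using assms(1) by (intro grid_nonneg) simp
  with assms(2,4) show "0 < s + w"
    by (auto simp: slot_def)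
  have "t x < s + w" if "x < l"
  proof -
    have "t x \<le> t (l - 1)"
      using that assms(3,5) by (intro grid_mono) auto
    with that assms(4,5) show ?thesis
      by (auto simp: slot_def)
  qed
  moreover have "s + w \<le> t x" if "l \<le> x"
  proof -
    have "s + w \<le> t l"
      using that assms(4,5) by (auto simp: slot_def)
    also have "t l \<le> t x"
      using that assms(5) by (intro grid_mono) auto
    finally show ?thesis .
  qed
  ultimately show "t x < s + w \<longleftrightarrow> x < l" "s + w \<le> t x \<longleftrightarrow> l \<le> x"
    by (meson not_le)+
qed

definition departure_weight :: "real \<Rightarrow> real \<Rightarrow> real" where
  "departure_weight s d = (\<Sum>x=1..m. (if s \<le> t x \<and> t x < d then \<alpha> x else 0)
     + (if s \<le> t x \<and> 0 < d \<and> d \<le> t x then \<beta> x else 0))"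

definition slot_weight :: "nat \<Rightarrow> nat \<Rightarrow> real" where
  "slot_weight k l = (\<Sum>x=1..m. (if k \<le> x \<and> x < l then \<alpha> x else 0) + (if k \<le> x \<and> l \<le> x then \<beta> x else 0))"

definition batch_weight :: "real \<times> mark \<Rightarrow> real" where
  "batch_weight p = (\<Sum>i<fst (snd p). departure_weight (fst p) (fst p + snd (snd p) i))"

lemma slot_weight_nonneg: "0 \<le> slot_weight k l"
  unfolding slot_weight_def using \<alpha>_nonneg \<beta>_nonneg by (intro sum_nonneg) auto

lemma departure_weight_slot:
  assumes "k \<le> m" "s \<in> {t (k - 1)<..t k}" "l \<in> {k..Suc m}" "w \<in> slot k l s"
  shows "departure_weight s (s + w) = slot_weight k l"
  unfolding departure_weight_def slot_weight_def
proof (rule sum.cong[OF refl])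
  fix x assume x: "x \<in> {1..m}"
  show "(if s \<le> t x \<and> t x < s + w then \<alpha> x else 0) + (if s \<le> t x \<and> 0 < s + w \<and> s + w \<le> t x then \<beta> x else 0) =
        (if k \<le> x \<and> x < l then \<alpha> x else 0) + (if k \<le> x \<and> l \<le> x then \<beta> x else 0)"
  proof (cases "k \<le> x")
    case True
    with x have "x \<in> {k..m}"
      by simp
    with True show ?thesis
      using departure_in_slot[OF assms] arrival_le_grid_iff[OF assms(1,2) x] by simp
  qed (use arrival_le_grid_iff[OF assms(1,2) x] in simp)
qed

lemma queue_exponent_eq_sum_batch_weight:
  assumes fin: "finite (P \<inter> {p. fst p \<le> t m})"
  shows "(\<Sum>k=1..m. \<alpha> k * real (queue_Q P (t k)) + \<beta> k * real (queue_D P (t k)))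
       = (\<Sum>p\<in>P \<inter> {p. fst p \<le> t m}. batch_weight p)"
proof -
  have arrived: "{p\<in>P. fst p \<le> t k} = {p \<in> P \<inter> {p. fst p \<le> t m}. fst p \<le> t k}" if "k \<in> {1..m}" for k
    using that grid_mono[of k m] by auto
  have "(\<Sum>k=1..m. \<alpha> k * real (queue_Q P (t k)) + \<beta> k * real (queue_D P (t k)))
     = (\<Sum>k=1..m. \<Sum>p\<in>P \<inter> {p. fst p \<le> t m}. \<Sum>i<fst (snd p).
          (if fst p \<le> t k \<and> t k < fst p + snd (snd p) i then \<alpha> k else 0) +
          (if fst p \<le> t k \<and> 0 < fst p + snd (snd p) i \<and> fst p + snd (snd p) i \<le> t k then \<beta> k else 0))"
  proof (intro sum.cong refl)
    fix k assume "k \<in> {1..m}"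
    show "\<alpha> k * real (queue_Q P (t k)) + \<beta> k * real (queue_D P (t k)) = (\<Sum>p\<in>P \<inter> {p. fst p \<le> t m}. \<Sum>i<fst (snd p).
          (if fst p \<le> t k \<and> t k < fst p + snd (snd p) i then \<alpha> k else 0) +
          (if fst p \<le> t k \<and> 0 < fst p + snd (snd p) i \<and> fst p + snd (snd p) i \<le> t k then \<beta> k else 0))"
      unfolding queue_Q_eq_sum_batch_count queue_D_eq_sum_batch_count arrived[OF \<open>k \<in> {1..m}\<close>]
        scaled_sum_batch_count[OF fin]
      by (simp add: sum.distrib conj_assoc)
  qed
  also have "\<dots> = (\<Sum>p\<in>P \<inter> {p. fst p \<le> t m}. batch_weight p)"
    unfolding batch_weight_def departure_weight_def by (subst sum.swap) (intro sum.cong refl sum.swap)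
  finally show ?thesis .
qed

section \<open>Partition into cells\<close>

fun cell :: "nat \<times> nat \<times> (nat \<Rightarrow> nat) \<Rightarrow> (real \<times> mark) set" where
  "cell (k, b, r) = {p. fst p \<in> {t (k - 1)<..t k} \<and> fst (snd p) = b \<and> (\<forall>i<b. snd (snd p) i \<in> slot k (r i) (fst p))}"

fun cell_weight :: "nat \<times> nat \<times> (nat \<Rightarrow> nat) \<Rightarrow> real" where
  "cell_weight (k, b, r) = (\<Sum>i<b. slot_weight k (r i))"

definition cell_index :: "nat \<Rightarrow> (nat \<times> nat \<times> (nat \<Rightarrow> nat)) set" where
  "cell_index n = (SIGMA k:{1..m}. SIGMA b:{1..n}. PiE {..<b} (\<lambda>_. {k..Suc m}))"

lemma mem_cell_index:
  "(k, b, r) \<in> cell_index n \<longleftrightarrow> k \<in> {1..m} \<and> b \<in> {1..n} \<and> r \<in> PiE {..<b} (\<lambda>_. {k..Suc m})"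
  unfolding cell_index_def by (rule mem_Sigma_iff[THEN trans]) simp

lemma finite_cell_index: "finite (cell_index n)"
  unfolding cell_index_def by (intro finite_SigmaI finite_PiE) auto

lemma sum_cell_index:
  "(\<Sum>j\<in>cell_index n. f j) = (\<Sum>k=1..m. \<Sum>b=1..n. \<Sum>r\<in>PiE {..<b} (\<lambda>_. {k..Suc m}). f (k, b, r))"
proof -
  have sum_Sigma: "sum g (Sigma A B) = (\<Sum>x\<in>A. \<Sum>y\<in>B x. g (x, y))"
    if "finite A" "\<forall>x\<in>A. finite (B x)" for A B g
    using sum.Sigma[OF that, of "\<lambda>x y. g (x, y)"] by simp
  show ?thesis
    unfolding cell_index_def by (simp add: sum_Sigma finite_PiE)
qed

lemma cell_in_sets: "cell j \<in> sets point_space"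
proof -
  obtain k b r where j: "j = (k, b, r)"
    using prod_cases3 by metis
  have "cell (k, b, r) = {p \<in> space point_space. fst p \<in> {t (k - 1)<..t k} \<and> fst (snd p) = b
     \<and> (\<forall>i\<in>{..<b}. 0 \<le> snd (snd p) i \<and> (r i \<noteq> k \<longrightarrow> t (r i - 1) < fst p + snd (snd p) i)
        \<and> (r i \<le> m \<longrightarrow> fst p + snd (snd p) i \<le> t (r i)))}"
    by (auto simp: slot_def)
  also have "\<dots> \<in> sets point_space"
    by measurable
  finally show ?thesis
    unfolding j .
qed

lemma batch_weight_cell:
  assumes "j \<in> cell_index n" "p \<in> cell j"
  shows "batch_weight p = cell_weight j"
proof -
  obtain k b r where j: "j = (k, b, r)"
    using prod_cases3 by metis
  have "k \<le> m" and r: "\<And>i. i < b \<Longrightarrow> r i \<in> {k..Suc m}"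
    using assms(1) unfolding j mem_cell_index by (auto simp: PiE_iff)
  from assms(2) have p: "fst p \<in> {t (k - 1)<..t k}" "fst (snd p) = b"
    "\<And>i. i < b \<Longrightarrow> snd (snd p) i \<in> slot k (r i) (fst p)"
    by (auto simp: j)
  have "batch_weight p = (\<Sum>i<b. departure_weight (fst p) (fst p + snd (snd p) i))"
    by (simp add: batch_weight_def p(2))
  also have "\<dots> = (\<Sum>i<b. slot_weight k (r i))"
    using \<open>k \<le> m\<close> p(1,3) r by (intro sum.cong refl departure_weight_slot) auto
  finally show ?thesis
    by (simp add: j)
qed

lemma cells_disjoint:
  assumes "j \<in> cell_index n" "j' \<in> cell_index n" "j \<noteq> j'"
  shows "cell j \<inter> cell j' = {}"
proof (rule ccontr)
  obtain k b r k' b' r' where j: "j = (k, b, r)" and j': "j' = (k', b', r')"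
    using prod_cases3 by metis
  assume "cell j \<inter> cell j' \<noteq> {}"
  then obtain p where "p \<in> cell (k, b, r)" "p \<in> cell (k', b', r')"
    unfolding j j' by blast
  then have p: "fst p \<in> {t (k - 1)<..t k}" "fst p \<in> {t (k' - 1)<..t k'}" "fst (snd p) = b" "fst (snd p) = b'"
    "\<And>i. i < b \<Longrightarrow> snd (snd p) i \<in> slot k (r i) (fst p)"
    "\<And>i. i < b' \<Longrightarrow> snd (snd p) i \<in> slot k' (r' i) (fst p)"
    by auto
  have r: "r \<in> PiE {..<b} (\<lambda>_. {k..Suc m})" and r': "r' \<in> PiE {..<b'} (\<lambda>_. {k'..Suc m})"
    and "k \<le> m" "k' \<le> m"
    using assms(1,2) unfolding j j' mem_cell_index by simp_all
  have "k = k'"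
    using \<open>k \<le> m\<close> \<open>k' \<le> m\<close> p(1,2) by (rule grid_interval_unique)
  have "b = b'"
    using p(3,4) by simp
  have "r = r'"
  proof (rule PiE_ext[OF r])
    show r'': "r' \<in> PiE {..<b} (\<lambda>_. {k..Suc m})"
      using r' \<open>k = k'\<close> \<open>b = b'\<close> by simp
    show "r i = r' i" if "i \<in> {..<b}" for i
    proof (rule slot_unique)
      show "r i \<in> {k..Suc m}" "r' i \<in> {k..Suc m}"
        using PiE_mem[OF r that] PiE_mem[OF r'' that] by simp_all
      show "snd (snd p) i \<in> slot k (r i) (fst p)" "snd (snd p) i \<in> slot k (r' i) (fst p)"
        using p(5,6) that \<open>k = k'\<close> \<open>b = b'\<close> by simp_all
    qed
  qed
  with \<open>k = k'\<close> \<open>b = b'\<close> assms(3) show False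
    unfolding j j' by simp
qed

lemma cell_subset_arrived_by:
  assumes "j \<in> cell_index n"
  shows "cell j \<subseteq> {p. fst p \<le> t m}"
proof -
  obtain k b r where j: "j = (k, b, r)"
    using prod_cases3 by metis
  with assms have "t k \<le> t m"
    by (intro grid_mono) (auto simp: mem_cell_index)
  then show ?thesis
    unfolding j by auto
qed

lemma batch_in_cell:
  assumes "fst p \<le> t m" "p \<notin> degenerate_batches" "fst (snd p) \<le> n"
  shows "\<exists>j\<in>cell_index n. p \<in> cell j"
proof -
  obtain s b w where p: "p = (s, b, w)"
    using prod_cases3 by metis
  with assms have "0 < s" "s \<le> t m" "1 \<le> b" "b \<le> n" and "\<not> (\<exists>i<b. w i < 0)"
    by (auto simp: degenerate_batches_def)
  then have w_nonneg: "\<And>i. i < b \<Longrightarrow> 0 \<le> w i"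
    by (meson not_less)
  have "0 < m"
    using \<open>0 < s\<close> \<open>s \<le> t m\<close> t0 by (cases m) auto
  then obtain k where k: "0 < k" "k \<le> m" "s \<in> {t (k - 1)<..t k}"
    using grid_interval_exists[of 0 m s] \<open>0 < s\<close> \<open>s \<le> t m\<close> t0 by auto
  have "\<forall>i\<in>{..<b}. \<exists>l. l \<in> {k..Suc m} \<and> w i \<in> slot k l s"
    using slot_exists[OF k(2,3)] w_nonneg by blast
  then obtain f where f: "\<And>i. i < b \<Longrightarrow> f i \<in> {k..Suc m} \<and> w i \<in> slot k (f i) s"
    by (metis bchoice lessThan_iff)
  define r where "r = restrict f {..<b}"
  have r: "r \<in> PiE {..<b} (\<lambda>_. {k..Suc m})" "\<And>i. i < b \<Longrightarrow> w i \<in> slot k (r i) s"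
    using f by (auto simp: r_def)
  then have "(k, b, r) \<in> cell_index n"
    using k \<open>1 \<le> b\<close> \<open>b \<le> n\<close> by (simp add: mem_cell_index)
  moreover have "p \<in> cell (k, b, r)"
    using k r by (simp add: p)
  ultimately show ?thesis
    by blast
qed

lemma sum_batch_weight_eq_sum_cells:
  assumes fin: "finite (P \<inter> {p. fst p \<le> t m})" and "P \<inter> degenerate_batches = {}"
    and "\<And>p. p \<in> P \<inter> {p. fst p \<le> t m} \<Longrightarrow> fst (snd p) \<le> n"
  shows "(\<Sum>p\<in>P \<inter> {p. fst p \<le> t m}. batch_weight p) = (\<Sum>j\<in>cell_index n. cell_weight j * real (card (P \<inter> cell j)))"
proof -
  have "P \<inter> {p. fst p \<le> t m} \<subseteq> (\<Union>j\<in>cell_index n. P \<inter> cell j)"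
  proof
    fix p assume p: "p \<in> P \<inter> {p. fst p \<le> t m}"
    moreover have "p \<notin> degenerate_batches"
      using p assms(2) by blast
    ultimately obtain j where "j \<in> cell_index n" "p \<in> cell j"
      using batch_in_cell[of p n] assms(3)[OF p] by auto
    with p show "p \<in> (\<Union>j\<in>cell_index n. P \<inter> cell j)"
      by blast
  qed
  moreover have "(\<Union>j\<in>cell_index n. P \<inter> cell j) \<subseteq> P \<inter> {p. fst p \<le> t m}"
    using cell_subset_arrived_by by blast
  ultimately have partition: "P \<inter> {p. fst p \<le> t m} = (\<Union>j\<in>cell_index n. P \<inter> cell j)"
    by (rule antisym)
  have "(\<Sum>p\<in>P \<inter> {p. fst p \<le> t m}. batch_weight p) = (\<Sum>j\<in>cell_index n. \<Sum>p\<in>P \<inter> cell j. batch_weight p)"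
    unfolding partition
  proof (rule sum.UNION_disjoint[OF finite_cell_index]; intro ballI impI)
    fix j assume "j \<in> cell_index n"
    then have "P \<inter> cell j \<subseteq> P \<inter> {p. fst p \<le> t m}"
      using cell_subset_arrived_by by blast
    then show "finite (P \<inter> cell j)"
      using fin by (rule finite_subset)
    fix j' assume "j' \<in> cell_index n" "j \<noteq> j'"
    with \<open>j \<in> cell_index n\<close> have "cell j \<inter> cell j' = {}"
      by (rule cells_disjoint)
    then show "P \<inter> cell j \<inter> (P \<inter> cell j') = {}"
      by blast
  qed
  also have "\<dots> = (\<Sum>j\<in>cell_index n. cell_weight j * real (card (P \<inter> cell j)))"
  proof (rule sum.cong[OF refl])
    fix j assume "j \<in> cell_index n"
    then have "(\<Sum>p\<in>P \<inter> cell j. batch_weight p) = (\<Sum>p\<in>P \<inter> cell j. cell_weight j)"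
      using batch_weight_cell by (intro sum.cong) auto
    then show "(\<Sum>p\<in>P \<inter> cell j. batch_weight p) = cell_weight j * real (card (P \<inter> cell j))"
      by simp
  qed
  finally show ?thesis .
qed

end

section \<open>Intensities of the cells\<close>

lemma sum_diff_pred_telescope:
  fixes F :: "nat \<Rightarrow> 'a::ab_group_add"
  shows "k \<le> n \<Longrightarrow> (\<Sum>l=Suc k..n. F l - F (l - 1)) = F n - F k"
  by (induction n rule: dec_induct) simp_all

lemma sum_PiE_exp_weights:
  fixes p v :: "'i \<Rightarrow> real"
  assumes "finite L"
  shows "(\<Sum>r\<in>PiE {..<b} (\<lambda>_. L). (1 - exp (- (\<Sum>i<b. v (r i)))) * (\<Prod>i<b. p (r i)))
       = (\<Sum>l\<in>L. p l) ^ b - (\<Sum>l\<in>L. exp (- v l) * p l) ^ b"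
proof -
  have "(\<Sum>l\<in>L. p l) ^ b = (\<Sum>r\<in>PiE {..<b} (\<lambda>_. L). \<Prod>i<b. p (r i))"
    using prod_sum_PiE[of "{..<b}" "\<lambda>_. L" "\<lambda>_ l. p l"] assms by simp
  moreover have "(\<Sum>l\<in>L. exp (- v l) * p l) ^ b = (\<Sum>r\<in>PiE {..<b} (\<lambda>_. L). \<Prod>i<b. exp (- v (r i)) * p (r i))"
    using prod_sum_PiE[of "{..<b}" "\<lambda>_. L" "\<lambda>_ l. exp (- v l) * p l"] assms by simp
  moreover have "(\<Prod>i<b. exp (- v (r i)) * p (r i)) = exp (- (\<Sum>i<b. v (r i))) * (\<Prod>i<b. p (r i))" for r
    by (simp add: prod.distrib exp_sum[symmetric] sum_negf)
  ultimately show ?thesis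
    by (simp add: sum_subtractf[symmetric] algebra_simps)
qed

context batch_arrivals_grid
begin

definition slot_prob :: "nat \<Rightarrow> nat \<Rightarrow> real \<Rightarrow> real" where
  "slot_prob k l s = measure (W s) (slot k l s)"

definition cell_density :: "nat \<Rightarrow> nat \<Rightarrow> (nat \<Rightarrow> nat) \<Rightarrow> real \<Rightarrow> real" where
  "cell_density k b r s = indicator {t (k - 1)<..t k} s * lam s * pmf (Bs s) b * (\<Prod>i<b. slot_prob k (r i) s)"

lemma measurable_slot_prob [measurable]: "slot_prob k l \<in> borel_measurable borel"
proof -
  have "(SIGMA s:space borel. slot k l s) = {x \<in> space (borel \<Otimes>\<^sub>M borel). 0 \<le> snd x
      \<and> (l \<noteq> k \<longrightarrow> t (l - 1) < fst x + snd x) \<and> (l \<le> m \<longrightarrow> fst x + snd x \<le> t l)}"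
    by (auto simp: slot_def space_pair_measure)
  also have "\<dots> \<in> sets (borel \<Otimes>\<^sub>M borel)"
    by measurable
  finally show ?thesis
    unfolding slot_prob_def by (rule measure_measurable_subprob_algebra2[OF _ W_meas])
qed

lemma slot_prob_nonneg: "0 \<le> slot_prob k l s"
  by (simp add: slot_prob_def)

lemma slot_prob_le_1: "slot_prob k l s \<le> 1"
  unfolding slot_prob_def using W_prob by (simp add: prob_space.prob_le_1)

lemma emeasure_slot: "emeasure (W s) (slot k l s) = ennreal (slot_prob k l s)"
  unfolding slot_prob_def using W_prob[of s] by (intro finite_measure.emeasure_eq_measure) (simp add: prob_space_def)

lemma measurable_cell_density [measurable]: "cell_density k b r \<in> borel_measurable borel"
  unfolding cell_density_def using lam_meas B_meas by measurable

lemma cell_density_nonneg: "0 \<le> cell_density k b r s"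
  unfolding cell_density_def using lam_nonneg slot_prob_nonneg by (auto intro!: mult_nonneg_nonneg prod_nonneg)

lemma cell_density_le: "cell_density k b r s \<le> indicator {t (k - 1)<..t k} s * lam s"
proof -
  have "pmf (Bs s) b * (\<Prod>i<b. slot_prob k (r i) s) \<le> 1 * 1"
    using slot_prob_le_1 slot_prob_nonneg by (intro mult_mono pmf_le_1 prod_le_1 prod_nonneg) auto
  then show ?thesis
    unfolding cell_density_def using lam_nonneg by (auto simp: indicator_def mult.assoc intro: mult_left_le)
qed

lemma integrable_period_lam: "k \<le> m \<Longrightarrow> integrable lborel (\<lambda>s. indicator {t (k - 1)<..t k} s * lam s)"
proof (rule Bochner_Integration.integrable_bound)
  show "integrable lborel (\<lambda>s. indicator {0..t k} s *\<^sub>R lam s)"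
    using lam_loc_int[of "t k"] by (simp add: set_integrable_def)
  assume "k \<le> m"
  then have "0 \<le> t (k - 1)"
    by (intro grid_nonneg) simp
  then show "AE s in lborel. norm (indicator {t (k - 1)<..t k} s * lam s) \<le> norm (indicator {0..t k} s *\<^sub>R lam s)"
    using lam_nonneg by (auto simp: indicator_def)
qed (use lam_meas in measurable)

lemma integrable_cell_density: "k \<le> m \<Longrightarrow> integrable lborel (cell_density k b r)"
  by (rule Bochner_Integration.integrable_bound[OF integrable_period_lam])
    (use cell_density_nonneg cell_density_le lam_nonneg in auto)

lemma batch_intensity_cell:
  assumes "k \<le> m"
  shows "batch_intensity lam Bs W (cell (k, b, r)) = ennreal (integral\<^sup>L lborel (cell_density k b r))"
proof -
  have "0 \<le> t (k - 1)"
    using assms by (intro grid_nonneg) simp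
  have "batch_intensity lam Bs W (cell (k, b, r)) = (\<integral>\<^sup>+ s. indicator {0..} s * ennreal (lam s) *
      (indicator {t (k - 1)<..t k} s * (ennreal (pmf (Bs s) b) * (\<Prod>i<b. emeasure (W s) (slot k (r i) s)))) \<partial>lborel)"
    unfolding cell.simps by (rule batch_intensity_rect[OF W_prob W_sets slot_in_sets])
  also have "\<dots> = (\<integral>\<^sup>+ s. ennreal (cell_density k b r s) \<partial>lborel)"
  proof (intro nn_integral_cong)
    fix s
    have "(\<Prod>i<b. emeasure (W s) (slot k (r i) s)) = ennreal (\<Prod>i<b. slot_prob k (r i) s)"
      by (simp add: emeasure_slot prod_ennreal slot_prob_nonneg)
    then show "indicator {0..} s * ennreal (lam s) * (indicator {t (k - 1)<..t k} s
        * (ennreal (pmf (Bs s) b) * (\<Prod>i<b. emeasure (W s) (slot k (r i) s)))) = ennreal (cell_density k b r s)"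
      using \<open>0 \<le> t (k - 1)\<close> lam_nonneg slot_prob_nonneg
      by (auto simp: cell_density_def indicator_def ennreal_mult[symmetric] prod_nonneg mult.assoc)
  qed
  also have "\<dots> = ennreal (integral\<^sup>L lborel (cell_density k b r))"
    using integrable_cell_density[OF assms] cell_density_nonneg by (intro nn_integral_eq_integral) auto
  finally show ?thesis .
qed

lemma slot_prob_first:
  assumes "k \<le> m" "s \<in> {t (k - 1)<..t k}"
  shows "slot_prob k k s = cdf (W s) (t k - s)"
proof -
  interpret prob_space "W s"
    by (rule W_prob)
  have "slot k k s = {..t k - s} - {..<0}"
    using assms by (auto simp: slot_def)
  moreover have "{..<0::real} \<in> null_sets (W s)"
    using W_nonneg W_sets by (intro null_setsI) auto
  ultimately show ?thesis
    unfolding slot_prob_def cdf_def2 using W_sets by (simp add: measure_Diff_null_set)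
qed

lemma slot_prob_middle:
  assumes "k < l" "l \<le> m" "s \<in> {t (k - 1)<..t k}"
  shows "slot_prob k l s = cdf (W s) (t l - s) - cdf (W s) (t (l - 1) - s)"
proof -
  interpret prob_space "W s"
    by (rule W_prob)
  have "t k \<le> t (l - 1)" "t (l - 1) \<le> t l"
    using assms by (auto intro: grid_mono)
  with assms have "slot k l s = {..t l - s} - {..t (l - 1) - s}"
    by (auto simp: slot_def)
  with \<open>t (l - 1) \<le> t l\<close> show ?thesis
    unfolding slot_prob_def cdf_def2 using W_sets by (simp add: finite_measure_Diff)
qed

lemma slot_prob_last:
  assumes "k \<le> m" "s \<in> {t (k - 1)<..t k}"
  shows "slot_prob k (Suc m) s = 1 - cdf (W s) (t m - s)"
proof -
  interpret prob_space "W s"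
    by (rule W_prob)
  have "t k \<le> t m"
    using assms by (intro grid_mono) auto
  with assms have "slot k (Suc m) s = space (W s) - {..t m - s}"
    using sets_eq_imp_space_eq[OF W_sets[of s]] by (auto simp: slot_def)
  then show ?thesis
    unfolding slot_prob_def cdf_def2 using W_sets by (simp add: prob_compl)
qed

lemma slot_weight_eq:
  assumes "1 \<le> k" "k \<le> l" "l \<le> Suc m"
  shows "slot_weight k l = (\<Sum>x=k..m. \<beta> x) + (\<Sum>x=k..l - 1. \<alpha> x - \<beta> x)"
proof -
  have "(\<Sum>x=1..m. (if k \<le> x \<and> x < l then \<alpha> x else 0)) = (\<Sum>x\<in>{x\<in>{1..m}. k \<le> x \<and> x < l}. \<alpha> x)"
    by (rule sum.inter_filter[symmetric]) simp
  also have "{x\<in>{1..m}. k \<le> x \<and> x < l} = {k..l - 1}"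
    using assms by auto
  finally have \<alpha>_part: "(\<Sum>x=1..m. (if k \<le> x \<and> x < l then \<alpha> x else 0)) = (\<Sum>x=k..l - 1. \<alpha> x)" .
  have "(\<Sum>x=1..m. (if k \<le> x \<and> l \<le> x then \<beta> x else 0)) = (\<Sum>x\<in>{x\<in>{1..m}. k \<le> x \<and> l \<le> x}. \<beta> x)"
    by (rule sum.inter_filter[symmetric]) simp
  also have "{x\<in>{1..m}. k \<le> x \<and> l \<le> x} = {l..m}"
    using assms by auto
  finally have \<beta>_part: "(\<Sum>x=1..m. (if k \<le> x \<and> l \<le> x then \<beta> x else 0)) = (\<Sum>x=l..m. \<beta> x)" .
  have "{k..m} = {k..l - 1} \<union> {l..m}" "{k..l - 1} \<inter> {l..m} = {}"
    using assms by auto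
  then have "(\<Sum>x=k..m. \<beta> x) = (\<Sum>x=k..l - 1. \<beta> x) + (\<Sum>x=l..m. \<beta> x)"
    by (simp add: sum.union_disjoint)
  then show ?thesis
    unfolding slot_weight_def sum.distrib \<alpha>_part \<beta>_part by (simp add: sum_subtractf)
qed

lemma sum_slot_prob:
  assumes "1 \<le> k" "k \<le> m" "s \<in> {t (k - 1)<..t k}"
  shows "(\<Sum>l=k..Suc m. slot_prob k l s) = 1"
proof -
  let ?F = "\<lambda>l. cdf (W s) (t l - s)"
  have "(\<Sum>l=k..Suc m. slot_prob k l s) = slot_prob k k s + (\<Sum>l=Suc k..m. slot_prob k l s) + slot_prob k (Suc m) s"
    using assms by (simp add: sum.atLeast_Suc_atMost)
  also have "(\<Sum>l=Suc k..m. slot_prob k l s) = (\<Sum>l=Suc k..m. ?F l - ?F (l - 1))"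
    using assms by (intro sum.cong refl slot_prob_middle) auto
  also have "\<dots> = ?F m - ?F k"
    using assms by (intro sum_diff_pred_telescope) simp
  finally show ?thesis
    using slot_prob_first[OF assms(2,3)] slot_prob_last[OF assms(2,3)] by simp
qed

text \<open>The slot probabilities are the increments of \<open>l \<mapsto> cdf (W s) (t l - s)\<close>, and
  \<open>exp (- slot_weight k l)\<close> factors as \<open>exp (- (\<Sum>x=k..m. \<beta> x))\<close> times \<open>exp (- (\<Sum>x=k..l-1. \<alpha> x - \<beta> x))\<close>;
  summation by parts then yields the bracket of \<open>gamma_fun\<close>.\<close>

lemma gamma_fun_eq:
  assumes "1 \<le> k" "k \<le> m" "s \<in> {t (k - 1)<..t k}"
  shows "gamma_fun (\<lambda>s. cdf (W s)) m t k b \<alpha> \<beta> s = 1 - (\<Sum>l=k..Suc m. exp (- slot_weight k l) * slot_prob k l s) ^ b"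
proof -
  let ?F = "\<lambda>l. cdf (W s) (t l - s)"
  let ?B = "\<Sum>x=k..m. \<beta> x"
  let ?e = "\<lambda>l. exp (- (\<Sum>x=k..l-1. \<alpha> x - \<beta> x))"
  have exp_weight: "exp (- slot_weight k l) = exp (- ?B) * ?e l" if "k \<le> l" "l \<le> Suc m" for l
    using slot_weight_eq[of k l] assms that by (simp add: exp_add[symmetric])
  have "(\<Sum>l=k..Suc m. exp (- slot_weight k l) * slot_prob k l s)
      = exp (- slot_weight k k) * slot_prob k k s + (\<Sum>l=Suc k..m. exp (- slot_weight k l) * slot_prob k l s)
        + exp (- slot_weight k (Suc m)) * slot_prob k (Suc m) s"
    using assms by (simp add: sum.atLeast_Suc_atMost)
  also have "(\<Sum>l=Suc k..m. exp (- slot_weight k l) * slot_prob k l s)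
      = exp (- ?B) * (\<Sum>l=Suc k..m. ?e l * (?F l - ?F (l - 1)))"
    unfolding sum_distrib_left using assms by (intro sum.cong refl) (simp add: slot_prob_middle exp_weight)
  also have "exp (- slot_weight k k) * slot_prob k k s = exp (- ?B) * ?F k"
    using exp_weight[of k] slot_prob_first[OF assms(2,3)] assms by simp
  also have "exp (- slot_weight k (Suc m)) * slot_prob k (Suc m) s = exp (- ?B) * (?e (Suc m) * (1 - ?F m))"
    using exp_weight[of "Suc m"] slot_prob_last[OF assms(2,3)] assms by simp
  also have "(\<Sum>l=Suc k..m. ?e l * (?F l - ?F (l - 1)))
      = (\<Sum>l=Suc k..m. ?F l - ?F (l - 1)) - (\<Sum>l=Suc k..m. (1 - ?e l) * (?F l - ?F (l - 1)))"
    by (simp add: sum_subtractf[symmetric] algebra_simps)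
  also have "(\<Sum>l=Suc k..m. ?F l - ?F (l - 1)) = ?F m - ?F k"
    using assms by (intro sum_diff_pred_telescope) simp
  finally have "(\<Sum>l=k..Suc m. exp (- slot_weight k l) * slot_prob k l s)
      = exp (- ?B) * (1 - (\<Sum>l=k+1..m. (1 - ?e l) * (?F l - ?F (l - 1))) - (1 - ?e (Suc m)) * (1 - ?F m))"
    by (simp add: algebra_simps)
  then show ?thesis
    unfolding gamma_fun_def by (simp add: power_mult_distrib exp_of_nat_mult[symmetric] mult_ac)
qed

lemma sum_cells_slot_prob:
  assumes "1 \<le> k" "k \<le> m" "s \<in> {t (k - 1)<..t k}"
  shows "(\<Sum>r\<in>PiE {..<b} (\<lambda>_. {k..Suc m}). (1 - exp (- cell_weight (k, b, r))) * (\<Prod>i<b. slot_prob k (r i) s))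
       = gamma_fun (\<lambda>s. cdf (W s)) m t k b \<alpha> \<beta> s"
proof -
  have "(\<Sum>r\<in>PiE {..<b} (\<lambda>_. {k..Suc m}). (1 - exp (- cell_weight (k, b, r))) * (\<Prod>i<b. slot_prob k (r i) s))
      = (\<Sum>l=k..Suc m. slot_prob k l s) ^ b - (\<Sum>l=k..Suc m. exp (- slot_weight k l) * slot_prob k l s) ^ b"
    unfolding cell_weight.simps by (rule sum_PiE_exp_weights) simp
  also have "\<dots> = gamma_fun (\<lambda>s. cdf (W s)) m t k b \<alpha> \<beta> s"
    unfolding sum_slot_prob[OF assms] gamma_fun_eq[OF assms] by simp
  finally show ?thesis .
qed

end

section \<open>Truncation and passage to the limit\<close>

context batch_arrivals_grid
begin

lemma cell_weight_nonneg: "0 \<le> cell_weight j"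
proof -
  obtain k b r where "j = (k, b, r)"
    using prod_cases3 by metis
  then show ?thesis
    using slot_weight_nonneg by (simp add: sum_nonneg)
qed

lemma batch_intensity_cell_finite:
  assumes "j \<in> cell_index n"
  shows "batch_intensity lam Bs W (cell j) < \<infinity>"
proof -
  obtain k b r where j: "j = (k, b, r)"
    using prod_cases3 by metis
  with assms have "k \<le> m"
    by (simp add: mem_cell_index)
  then show ?thesis
    unfolding j by (simp add: batch_intensity_cell del: cell.simps)
qed

definition period_density :: "nat \<Rightarrow> nat \<Rightarrow> real \<Rightarrow> real" where
  "period_density k b s = (\<Sum>r\<in>PiE {..<b} (\<lambda>_. {k..Suc m}). (1 - exp (- cell_weight (k, b, r))) * cell_density k b r s)"

definition gamma_integral :: "nat \<Rightarrow> nat \<Rightarrow> real" where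
  "gamma_integral k b = (\<integral>s\<in>{t (k - 1)..<t k}. gamma_fun (\<lambda>s. cdf (W s)) m t k b \<alpha> \<beta> s * pmf (Bs s) b * lam s \<partial>lborel)"

lemma integrable_period_density: "k \<le> m \<Longrightarrow> integrable lborel (period_density k b)"
  unfolding period_density_def[abs_def] by (intro Bochner_Integration.integrable_sum integrable_mult_right integrable_cell_density)

lemma integral_period_density:
  assumes "k \<le> m"
  shows "integral\<^sup>L lborel (period_density k b)
    = (\<Sum>r\<in>PiE {..<b} (\<lambda>_. {k..Suc m}). (1 - exp (- cell_weight (k, b, r))) * integral\<^sup>L lborel (cell_density k b r))"
  unfolding period_density_def[abs_def] using integrable_cell_density[OF assms]
  by (subst Bochner_Integration.integral_sum) auto

lemma period_density_nonneg: "0 \<le> period_density k b s"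
  unfolding period_density_def using cell_weight_nonneg cell_density_nonneg
  by (intro sum_nonneg mult_nonneg_nonneg) auto

lemma period_density_eq:
  assumes "1 \<le> k" "k \<le> m"
  shows "period_density k b s = indicator {t (k - 1)<..t k} s * lam s * pmf (Bs s) b * gamma_fun (\<lambda>s. cdf (W s)) m t k b \<alpha> \<beta> s"
proof -
  have "period_density k b s = indicator {t (k - 1)<..t k} s * lam s * pmf (Bs s) b *
      (\<Sum>r\<in>PiE {..<b} (\<lambda>_. {k..Suc m}). (1 - exp (- cell_weight (k, b, r))) * (\<Prod>i<b. slot_prob k (r i) s))"
    unfolding period_density_def cell_density_def sum_distrib_left by (intro sum.cong refl) (simp add: mult_ac)
  then show ?thesis
    by (cases "s \<in> {t (k - 1)<..t k}") (simp_all add: sum_cells_slot_prob[OF assms] del: cell_weight.simps)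
qed

lemma period_density_le:
  assumes "1 \<le> k" "k \<le> m"
  shows "period_density k b s \<le> indicator {t (k - 1)<..t k} s * lam s * pmf (Bs s) b"
proof (cases "s \<in> {t (k - 1)<..t k}")
  case True
  have "0 \<le> (\<Sum>l=k..Suc m. exp (- slot_weight k l) * slot_prob k l s) ^ b"
    using slot_prob_nonneg by (intro zero_le_power sum_nonneg) simp
  then have "gamma_fun (\<lambda>s. cdf (W s)) m t k b \<alpha> \<beta> s \<le> 1"
    unfolding gamma_fun_eq[OF assms True] by simp
  then show ?thesis
    unfolding period_density_eq[OF assms] using lam_nonneg True
    by (simp add: mult_left_le)
qed (simp add: period_density_eq[OF assms])

lemma integral_period_density_eq_gamma_integral:
  assumes "1 \<le> k" "k \<le> m"
  shows "integral\<^sup>L lborel (period_density k b) = gamma_integral k b"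
  unfolding gamma_integral_def set_lebesgue_integral_def
proof (rule integral_discrete_difference[where X="{t (k - 1), t k}"])
  show "period_density k b s = indicator {t (k - 1)..<t k} s *\<^sub>R (gamma_fun (\<lambda>s. cdf (W s)) m t k b \<alpha> \<beta> s * pmf (Bs s) b * lam s)"
    if "s \<notin> {t (k - 1), t k}" for s
    using that by (auto simp: period_density_eq[OF assms] indicator_def mult_ac)
qed auto

lemma truncated_laplace:
  "prob_space.expectation M (\<lambda>\<omega>. exp (- (\<Sum>j\<in>cell_index n. cell_weight j * real (card (Pts \<omega> \<inter> cell j)))))
     = exp (- (\<Sum>k=1..m. \<Sum>b<n. gamma_integral k (Suc b)))"
proof -
  have intensity: "batch_intensity lam Bs W (cell (k, b, r)) = ennreal (integral\<^sup>L lborel (cell_density k b r))"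
    if "(k, b, r) \<in> cell_index n" for k b r
    using that by (intro batch_intensity_cell) (simp add: mem_cell_index)
  have "prob_space.expectation M (\<lambda>\<omega>. exp (- (\<Sum>j\<in>cell_index n. cell_weight j * real (card (Pts \<omega> \<inter> cell j)))))
      = exp (- (\<Sum>j\<in>cell_index n. (1 - exp (- cell_weight j)) * enn2real (batch_intensity lam Bs W (cell j))))"
    by (rule batch_poisson_process_laplace[OF proc finite_cell_index cell_in_sets batch_intensity_cell_finite
          cells_disjoint cell_weight_nonneg])
  also have "(\<Sum>j\<in>cell_index n. (1 - exp (- cell_weight j)) * enn2real (batch_intensity lam Bs W (cell j)))
      = (\<Sum>k=1..m. \<Sum>b=1..n. integral\<^sup>L lborel (period_density k b))"
    unfolding sum_cell_index
  proof (intro sum.cong refl)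
    fix k b assume "k \<in> {1..m}" "b \<in> {1..n}"
    then have "(k, b, r) \<in> cell_index n" if "r \<in> PiE {..<b} (\<lambda>_. {k..Suc m})" for r
      using that by (simp add: mem_cell_index)
    then show "(\<Sum>r\<in>PiE {..<b} (\<lambda>_. {k..Suc m}). (1 - exp (- cell_weight (k, b, r))) * enn2real (batch_intensity lam Bs W (cell (k, b, r))))
        = integral\<^sup>L lborel (period_density k b)"
      using \<open>k \<in> {1..m}\<close> cell_density_nonneg
      by (simp add: integral_period_density intensity Bochner_Integration.integral_nonneg
          del: cell.simps cell_weight.simps)
  qed
  also have "\<dots> = (\<Sum>k=1..m. \<Sum>b<n. gamma_integral k (Suc b))"
    by (rule sum.cong[OF refl]) (simp add: sum.atLeast1_atMost_eq integral_period_density_eq_gamma_integral)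
  finally show ?thesis .
qed

lemma summable_gamma_integral:
  assumes "1 \<le> k" "k \<le> m"
  shows "summable (\<lambda>b. gamma_integral k (Suc b))"
proof (rule bounded_imp_summable)
  show "0 \<le> gamma_integral k (Suc b)" for b
    unfolding integral_period_density_eq_gamma_integral[OF assms, symmetric]
    using period_density_nonneg by (simp add: Bochner_Integration.integral_nonneg)
  have pmf_sum: "(\<Sum>b\<le>N. pmf (Bs s) (Suc b)) \<le> 1" for N s
  proof -
    have "(\<Sum>b\<le>N. pmf (Bs s) (Suc b)) = measure (measure_pmf (Bs s)) (Suc ` {..N})"
      by (simp add: sum.reindex measure_measure_pmf_finite)
    then show ?thesis
      by simp
  qed
  have bound: "(\<Sum>b\<le>N. period_density k (Suc b) s) \<le> indicator {t (k - 1)<..t k} s * lam s" for N s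
  proof -
    have "(\<Sum>b\<le>N. period_density k (Suc b) s) \<le> (\<Sum>b\<le>N. indicator {t (k - 1)<..t k} s * lam s * pmf (Bs s) (Suc b))"
      by (intro sum_mono period_density_le[OF assms])
    also have "\<dots> = indicator {t (k - 1)<..t k} s * lam s * (\<Sum>b\<le>N. pmf (Bs s) (Suc b))"
      by (simp add: sum_distrib_left)
    also have "\<dots> \<le> indicator {t (k - 1)<..t k} s * lam s * 1"
      using lam_nonneg pmf_sum by (intro mult_left_mono) auto
    finally show ?thesis
      by simp
  qed
  fix N
  have "(\<Sum>b\<le>N. gamma_integral k (Suc b)) = integral\<^sup>L lborel (\<lambda>s. \<Sum>b\<le>N. period_density k (Suc b) s)"
    using integrable_period_density[OF assms(2)]
    by (simp add: integral_period_density_eq_gamma_integral[OF assms, symmetric] Bochner_Integration.integral_sum)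
  also have "\<dots> \<le> integral\<^sup>L lborel (\<lambda>s. indicator {t (k - 1)<..t k} s * lam s)"
    using integrable_period_density[OF assms(2)] integrable_period_lam[OF assms(2)] bound
    by (intro Bochner_Integration.integral_mono) auto
  finally show "(\<Sum>b\<le>N. gamma_integral k (Suc b)) \<le> integral\<^sup>L lborel (\<lambda>s. indicator {t (k - 1)<..t k} s * lam s)" .
qed

lemma AE_eventually_cells_eq_queue_exponent:
  "AE \<omega> in M. eventually (\<lambda>n. (\<Sum>j\<in>cell_index n. cell_weight j * real (card (Pts \<omega> \<inter> cell j)))
     = (\<Sum>k=1..m. \<alpha> k * real (queue_Q (Pts \<omega>) (t k)) + \<beta> k * real (queue_D (Pts \<omega>) (t k)))) sequentially"
  using AE_finite_arrived_by[of "t m"] AE_no_degenerate_batches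
proof eventually_elim
  case (elim \<omega>)
  define N where "N = Max (insert 0 ((\<lambda>p. fst (snd p)) ` (Pts \<omega> \<inter> {p. fst p \<le> t m})))"
  have bound: "fst (snd p) \<le> n" if "N \<le> n" "p \<in> Pts \<omega> \<inter> {p. fst p \<le> t m}" for p n
    using that elim(1) Max_ge[of "insert 0 ((\<lambda>p. fst (snd p)) ` (Pts \<omega> \<inter> {p. fst p \<le> t m}))" "fst (snd p)"]
    by (auto simp: N_def)
  show ?case
  proof (rule eventually_sequentiallyI[of N])
    fix n assume "N \<le> n"
    show "(\<Sum>j\<in>cell_index n. cell_weight j * real (card (Pts \<omega> \<inter> cell j)))
       = (\<Sum>k=1..m. \<alpha> k * real (queue_Q (Pts \<omega>) (t k)) + \<beta> k * real (queue_D (Pts \<omega>) (t k)))"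
      using queue_exponent_eq_sum_batch_weight[OF elim(1)]
        sum_batch_weight_eq_sum_cells[OF elim(1,2) bound[OF \<open>N \<le> n\<close>]] by simp
  qed
qed

lemma tendsto_truncated_laplace:
  "(\<lambda>n. prob_space.expectation M (\<lambda>\<omega>. exp (- (\<Sum>j\<in>cell_index n. cell_weight j * real (card (Pts \<omega> \<inter> cell j))))))
     \<longlonglongrightarrow> prob_space.expectation M
       (\<lambda>\<omega>. exp (- (\<Sum>k=1..m. \<alpha> k * real (queue_Q (Pts \<omega>) (t k)) + \<beta> k * real (queue_D (Pts \<omega>) (t k)))))"
proof -
  interpret prob_space M
    by (rule batch_poisson_process_prob_space[OF proc])
  show ?thesis
  proof (rule integral_dominated_convergence[where w="\<lambda>_. 1"])
    have [measurable]: "(\<lambda>\<omega>. card (Pts \<omega> \<inter> cell j)) \<in> measurable M (count_space UNIV)" if "j \<in> cell_index n" for j n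
      using that by (intro measurable_batch_poisson_count[OF proc cell_in_sets batch_intensity_cell_finite])
    show "(\<lambda>\<omega>. exp (- (\<Sum>j\<in>cell_index n. cell_weight j * real (card (Pts \<omega> \<inter> cell j))))) \<in> borel_measurable M" for n
      by measurable
    show "(\<lambda>\<omega>. exp (- (\<Sum>k=1..m. \<alpha> k * real (queue_Q (Pts \<omega>) (t k)) + \<beta> k * real (queue_D (Pts \<omega>) (t k)))))
        \<in> borel_measurable M"
      by measurable
    show "AE \<omega> in M. norm (exp (- (\<Sum>j\<in>cell_index n. cell_weight j * real (card (Pts \<omega> \<inter> cell j))))) \<le> 1" for n
      using cell_weight_nonneg by (intro AE_I2) (simp add: sum_nonneg)
    show "AE \<omega> in M. (\<lambda>n. exp (- (\<Sum>j\<in>cell_index n. cell_weight j * real (card (Pts \<omega> \<inter> cell j)))))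
        \<longlonglongrightarrow> exp (- (\<Sum>k=1..m. \<alpha> k * real (queue_Q (Pts \<omega>) (t k)) + \<beta> k * real (queue_D (Pts \<omega>) (t k))))"
      using AE_eventually_cells_eq_queue_exponent
      by eventually_elim (auto elim: eventually_mono intro: tendsto_eventually)
  qed simp
qed

end

theorem theorem3:
  fixes M :: "'a measure" and Pts :: "'a \<Rightarrow> (real \<times> mark) set"
    and lam :: "real \<Rightarrow> real" and Bs :: "real \<Rightarrow> nat pmf" and W :: "real \<Rightarrow> real measure"
    and m :: nat and t :: "nat \<Rightarrow> real" and \<alpha> \<beta> :: "nat \<Rightarrow> real"
  assumes lam_nonneg: "\<And>s. 0 \<le> lam s"
    and lam_meas: "lam \<in> borel_measurable borel"
    and lam_loc_int: "\<And>T. set_integrable lborel {0..T} lam"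
    and B_pos: "\<And>s. 0 \<notin> set_pmf (Bs s)"
    and B_meas: "\<And>b. (\<lambda>s. pmf (Bs s) b) \<in> borel_measurable borel"
    and W_prob: "\<And>s. prob_space (W s)"
    and W_sets: "\<And>s. sets (W s) = sets borel"
    and W_nonneg: "\<And>s. emeasure (W s) {..<0} = 0"
    and W_meas: "W \<in> measurable borel (subprob_algebra borel)"
    and proc: "batch_poisson_process M Pts lam Bs W"
    and t0: "t 0 = 0"
    and t_mono: "\<And>k. k < m \<Longrightarrow> t k < t (Suc k)"
    and \<alpha>_nonneg: "\<And>k. k \<in> {1..m} \<Longrightarrow> 0 \<le> \<alpha> k"
    and \<beta>_nonneg: "\<And>k. k \<in> {1..m} \<Longrightarrow> 0 \<le> \<beta> k"
  shows "prob_space.expectation M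
           (\<lambda>\<omega>. exp (- (\<Sum>k=1..m. \<alpha> k * real (queue_Q (Pts \<omega>) (t k)) + \<beta> k * real (queue_D (Pts \<omega>) (t k)))))
         = exp (- (\<Sum>k=1..m. \<Sum>b. (\<integral>s\<in>{t (k-1)..<t k}.
              gamma_fun (\<lambda>s. cdf (W s)) m t k (Suc b) \<alpha> \<beta> s * pmf (Bs s) (Suc b) * lam s \<partial>lborel)))"
proof -
  interpret batch_arrivals_grid M Pts lam Bs W m t \<alpha> \<beta>
    by (intro batch_arrivals_grid.intro batch_arrivals.intro batch_arrivals_grid_axioms.intro) (fact assms)+
  have "(\<lambda>n. exp (- (\<Sum>k=1..m. \<Sum>b<n. gamma_integral k (Suc b)))) \<longlonglongrightarrow> exp (- (\<Sum>k=1..m. \<Sum>b. gamma_integral k (Suc b)))"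
    using summable_gamma_integral by (intro tendsto_exp tendsto_minus tendsto_sum summable_LIMSEQ) auto
  with tendsto_truncated_laplace show ?thesis
    unfolding truncated_laplace gamma_integral_def by (rule LIMSEQ_unique)
qed

end
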